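(* Let $p$ be an odd prime and let $F_{g\,\mathsf{ANY},\,h\,\mathsf{ANY}}(p)$ denote the number of pairs $(g,h)$ of integers with $1\le g\le p-1$, $1\le h\le p-1$ and $g^{h}\equiv h \pmod p$. Then \[ \left|F_{g\,\mathsf{ANY},\,h\,\mathsf{ANY}}(p)-(p-1)\right|\le d(p-1)\,\sigma(p-1)\,\sqrt{p}\,(1+\ln p). \]
   Context: $d(n)$ denotes the number of positive divisors of $n$, $\sigma(n)$ the sum of the positive divisors of $n$, and $\ln$ the natural logarithm. *)

theory Defs
  imports "HOL-Number_Theory.Number_Theory"
begin

definition num_divisors :: "nat \<Rightarrow> nat" where
  "num_divisors n = card {d. d dvd n \<and> 0 < d}"

definition sum_divisors :: "nat \<Rightarrow> nat" where
  "sum_divisors n = \<Sum> {d. d dvd n \<and> 0 < d}"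

definition F_any_any :: "nat \<Rightarrow> nat" where
  "F_any_any p = card {(g, h). g \<in> {1..p-1} \<and> h \<in> {1..p-1} \<and> [g ^ h = h] (mod p)}"

end

theory Submission
  imports Defs
begin

(* For fixed h, write gcd(h, p - 1) = h a - (p - 1) b.  By Fermat every solution g of
   g^h = h (mod p) satisfies g^gcd(h, p - 1) = h^a (mod p), so there are at most
   gcd(h, p - 1) of them.  Summing over h gives F <= (p - 1) d(p - 1), and this already
   implies the stated bound because sigma(p - 1) >= p - 1 and sqrt p (1 + ln p) >= 1. *)

lemma card_pow_cong_le_gcd:
  fixes p h c :: nat
  assumes p: "prime p" and h: "0 < h"
  shows "card {g \<in> {1..p-1}. [g ^ h = c] (mod p)} \<le> gcd h (p - 1)"
proof -
  let ?d = "gcd h (p - 1)"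
  obtain a b where bezout: "h * a = (p - 1) * b + ?d"
    using bezout_nat[of h "p - 1"] h by auto
  have "{g \<in> {1..p-1}. [g ^ h = c] (mod p)} \<subseteq> {x \<in> {..<p}. [x ^ ?d = c ^ a] (mod p)}"
  proof safe
    fix g assume g: "g \<in> {1..p-1}" and root: "[g ^ h = c] (mod p)"
    then show "g < p" using p prime_gt_0_nat by auto
    have "\<not> p dvd g" using g by (auto dest: dvd_imp_le)
    then have fermat: "[g ^ (p - 1) = 1] (mod p)" using fermat_theorem[OF p] by blast
    have "[g ^ ?d = g ^ ?d * (g ^ (p - 1)) ^ b] (mod p)"
      using cong_mult[OF cong_refl cong_pow[OF fermat, of b]] by (simp add: cong_sym)
    also have "g ^ ?d * (g ^ (p - 1)) ^ b = (g ^ h) ^ a"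
      by (simp add: bezout power_add flip: power_mult)
    also have "[(g ^ h) ^ a = c ^ a] (mod p)" using root by (rule cong_pow)
    finally show "[g ^ ?d = c ^ a] (mod p)" .
  qed
  then have "card {g \<in> {1..p-1}. [g ^ h = c] (mod p)}
      \<le> card {x \<in> {..<p}. [x ^ ?d = c ^ a] (mod p)}"
    by (rule card_mono[rotated]) simp
  also have "\<dots> \<le> ?d" using roots_mod_prime_bound[OF p] h by simp
  finally show ?thesis .
qed

lemma card_multiples_atLeastAtMost:
  fixes d n :: nat
  assumes "0 < d"
  shows "card {h \<in> {1..n}. d dvd h} = n div d"
proof -
  have "{h \<in> {1..n}. d dvd h} = (\<lambda>k. d * k) ` {1..n div d}"
    using assms by (auto simp: less_eq_div_iff_mult_less_eq mult.commute elim!: dvdE)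
  then show ?thesis using assms by (simp add: card_image inj_on_def)
qed

lemma sum_gcd_le_mult_num_divisors:
  fixes n :: nat
  assumes n: "0 < n"
  shows "(\<Sum>h\<in>{1..n}. gcd h n) \<le> n * num_divisors n"
proof -
  let ?D = "{d. d dvd n \<and> 0 < d}"
  have "finite ?D" using n by simp
  have "(\<Sum>h\<in>{1..n}. gcd h n) = (\<Sum>d\<in>?D. \<Sum>h\<in>{h \<in> {1..n}. gcd h n = d}. gcd h n)"
    by (rule sum.group[symmetric]) (use \<open>finite ?D\<close> n in auto)
  also have "\<dots> = (\<Sum>d\<in>?D. d * card {h \<in> {1..n}. gcd h n = d})"
    by (simp add: mult.commute)
  also have "\<dots> \<le> (\<Sum>d\<in>?D. d * card {h \<in> {1..n}. d dvd h})"
    by (intro sum_mono mult_left_mono card_mono) auto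
  also have "\<dots> = (\<Sum>d\<in>?D. d * (n div d))"
    by (intro sum.cong refl) (subst card_multiples_atLeastAtMost; simp)
  also have "\<dots> \<le> (\<Sum>d\<in>?D. n)"
    by (intro sum_mono) simp
  finally show ?thesis by (simp add: num_divisors_def mult.commute)
qed

lemma num_divisors_pos:
  fixes n :: nat
  assumes "0 < n"
  shows "0 < num_divisors n"
  using assms unfolding num_divisors_def by (subst card_gt_0_iff) auto

lemma le_sum_divisors:
  fixes n :: nat
  shows "n \<le> sum_divisors n"
proof (cases "n = 0")
  case False
  then show ?thesis unfolding sum_divisors_def by (intro member_le_sum) auto
qed simp

lemma F_any_any_eq_sum:
  "F_any_any p = (\<Sum>h\<in>{1..p-1}. card {g \<in> {1..p-1}. [g ^ h = h] (mod p)})"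
proof -
  have "{(g, h). g \<in> {1..p-1} \<and> h \<in> {1..p-1} \<and> [g ^ h = h] (mod p)}
      = prod.swap ` (SIGMA h:{1..p-1}. {g \<in> {1..p-1}. [g ^ h = h] (mod p)})"
    by auto
  then show ?thesis unfolding F_any_any_def by (simp add: card_image)
qed

lemma F_any_any_le:
  fixes p :: nat
  assumes p: "prime p"
  shows "F_any_any p \<le> (p - 1) * num_divisors (p - 1)"
proof -
  have "F_any_any p \<le> (\<Sum>h\<in>{1..p-1}. gcd h (p - 1))"
    unfolding F_any_any_eq_sum by (intro sum_mono card_pow_cong_le_gcd[OF p]) simp
  also have "\<dots> \<le> (p - 1) * num_divisors (p - 1)"
    using sum_gcd_le_mult_num_divisors prime_gt_1_nat[OF p] by simp
  finally show ?thesis .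
qed

theorem mainTheorem1:
  fixes p :: nat
  assumes "prime p" and "odd p"
  shows "\<bar>real (F_any_any p) - real (p - 1)\<bar>
           \<le> real (num_divisors (p - 1)) * real (sum_divisors (p - 1)) * sqrt (real p) * (1 + ln (real p))"
proof -
  let ?n = "p - 1"
  have "1 < p" using assms(1) prime_gt_1_nat by blast
  have "real ?n \<le> real ?n * real (num_divisors ?n)"
    using num_divisors_pos[of ?n] \<open>1 < p\<close> by simp
  moreover have "real (F_any_any p) \<le> real ?n * real (num_divisors ?n)"
    using F_any_any_le[OF assms(1)] by (simp flip: of_nat_mult)
  ultimately have "\<bar>real (F_any_any p) - real ?n\<bar> \<le> real ?n * real (num_divisors ?n)"
    by linarith
  also have "\<dots> \<le> real (num_divisors ?n) * real (sum_divisors ?n)"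
    using mult_left_mono[OF le_sum_divisors[of ?n], of "num_divisors ?n"]
    by (simp add: mult.commute flip: of_nat_mult)
  also have "\<dots> \<le> real (num_divisors ?n) * real (sum_divisors ?n) * (sqrt (real p) * (1 + ln (real p)))"
  proof -
    have "1 \<le> sqrt (real p)" "1 \<le> 1 + ln (real p)" using \<open>1 < p\<close> by auto
    then have "1 \<le> sqrt (real p) * (1 + ln (real p))" using mult_mono[of 1 _ 1] by fastforce
    from mult_left_mono[OF this, of "real (num_divisors ?n) * real (sum_divisors ?n)"]
    show ?thesis by simp
  qed
  finally show ?thesis by (simp add: mult.assoc)
qed

end
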